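(* Consider the uncontrolled network SIS system $\dot x=(-D+B-XB)x$ and the controlled system $\dot x=(-D-H(x)+B-XB)x$, with $B$ irreducible and $s(-D+B)>0$, where $H(x)=\operatorname{diag}(h_1(x_1),\dots,h_n(x_n))$, each $h_i:[0,1]\to\mathbb{R}_{\ge0}$ is bounded, smooth, monotonically nondecreasing with $h_i(0)=0$, and there exists an index $j$ such that $h_j(s)>0$ for all $s\in(0,1]$. Let $x^*$ and $\bar x^*$ denote the unique endemic equilibria (in $\Xi_n\setminus\{0_n\}$) of the uncontrolled and controlled systems, respectively. Then $\bar x^*<x^*$ entrywise, i.e. $\bar x^*_i<x^*_i$ for every $i=1,\dots,n$.
   Context: $n\ge2$, $D=\operatorname{diag}(d_1,\dots,d_n)$ with $d_i>0$, $B=(b_{ij})\in\mathbb{R}^{n\times n}$ entrywise nonnegative and irreducible (equivalently, its directed graph is strongly connected), $X=\operatorname{diag}(x_1,\dots,x_n)$. $\Xi_n=[0,1]^n$. $s(M)$ denotes the largest real part of the eigenvalues of a square matrix $M$. (Under these hypotheses each system has exactly one equilibrium in $\Xi_n\setminus\{0_n\}$, lying in the interior of $\Xi_n$.) *)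

theory Defs
  imports "HOL-Analysis.Analysis"
begin

definition diag_mat :: "('a::zero)^'n \<Rightarrow> 'a^'n^'n" where
  "diag_mat v = (\<chi> i j. if i = j then v $ i else 0)"

definition cmat :: "real^'n^'n \<Rightarrow> complex^'n^'n" where
  "cmat M = (\<chi> i j. complex_of_real (M $ i $ j))"

definition spectral_abscissa :: "real^'n^'n \<Rightarrow> real" where
  "spectral_abscissa M = Max (Re ` {z. det (mat z - cmat M) = 0})"

text \<open>Irreducible nonnegative matrix: its directed graph (edge i -> j iff B_ij \<noteq> 0)
  is strongly connected.\<close>
definition irreducible_mat :: "real^'n^'n \<Rightarrow> bool" where
  "irreducible_mat B \<longleftrightarrow> (\<forall>i j. (i, j) \<in> {(i, j). B $ i $ j \<noteq> 0}\<^sup>*)"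

definition smooth_on :: "real set \<Rightarrow> (real \<Rightarrow> real) \<Rightarrow> bool" where
  "smooth_on S h \<longleftrightarrow> (\<exists>f :: nat \<Rightarrow> real \<Rightarrow> real. f 0 = h \<and>
     (\<forall>k. \<forall>x\<in>S. (f k has_real_derivative f (Suc k) x) (at x within S)))"

definition Xi :: "(real^'n) set" where
  "Xi = {x. \<forall>i. 0 \<le> x $ i \<and> x $ i \<le> 1}"

end

theory Submission
  imports Defs
begin

text \<open>Componentwise, an equilibrium with recovery rates \<open>e\<close> satisfies
  \<open>e\<^sub>i x\<^sub>i = (1 - x\<^sub>i) (B x)\<^sub>i\<close>, and the controlled equilibrium is the equilibrium
  for the larger rates \<open>e = d + h(x\<^sup>*)\<close>. A maximal-ratio argument shows that larger
  rates give a componentwise smaller endemic state. Where the two states touch, the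
  equations force the rates to agree and \<open>B\<close> to see no difference between the states
  along outgoing edges, so by irreducibility the states touch everywhere or nowhere;
  the index with \<open>h\<^sub>j > 0\<close> rules out the first case.\<close>

lemma diag_mat_mult_vector_nth: "(diag_mat v *v x) $ i = v $ i * x $ i"
proof -
  have "\<And>j. (if i = j then v $ i else 0) * x $ j = (if j = i then v $ i * x $ i else 0)"
    by simp
  then show ?thesis
    by (simp add: diag_mat_def matrix_vector_mult_def)
qed

lemma diag_mat_add:
  fixes u v :: "'a::monoid_add^'n"
  shows "diag_mat (u + v) = diag_mat u + diag_mat v"
  by (simp add: diag_mat_def vec_eq_iff)

lemma matrix_vector_mult_uminus:
  fixes A :: "'a::ring_1^'n^'m"
  shows "(- A) *v x = - (A *v x)"
  by (simp add: matrix_vector_mult_def vec_eq_iff sum_negf)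

lemma sis_field_nth:
  fixes e x :: "'a::comm_ring_1^'n" and B :: "'a^'n^'n"
  shows "((- diag_mat e + B - diag_mat x ** B) *v x) $ i
     = (1 - x $ i) * (B *v x) $ i - e $ i * x $ i"
  unfolding matrix_vector_mult_diff_rdistrib matrix_vector_mult_add_rdistrib
    matrix_vector_mult_uminus
  by (simp add: diag_mat_mult_vector_nth algebra_simps flip: matrix_vector_mul_assoc)

definition sis_equilibrium :: "real^'n \<Rightarrow> real^'n^'n \<Rightarrow> real^'n \<Rightarrow> bool" where
  "sis_equilibrium e B x \<longleftrightarrow> (- diag_mat e + B - diag_mat x ** B) *v x = 0"

lemma sis_equilibrium_iff:
  "sis_equilibrium e B x \<longleftrightarrow> (\<forall>i. e $ i * x $ i = (1 - x $ i) * (B *v x) $ i)"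
  unfolding sis_equilibrium_def vec_eq_iff sis_field_nth zero_index right_minus_eq
  by (metis (no_types))

lemma nonneg_matrix_vector_mono:
  fixes B :: "real^'n^'m"
  assumes "\<forall>i j. B $ i $ j \<ge> 0" and "\<forall>j. u $ j \<le> v $ j"
  shows "(B *v u) $ i \<le> (B *v v) $ i"
  unfolding matrix_vector_mult_def vec_lambda_beta
  by (intro sum_mono mult_left_mono) (use assms in auto)

lemma irreducible_nonneg_vanishing:
  fixes B :: "real^'n^'n"
  assumes irr: "irreducible_mat B" and B_nonneg: "\<forall>i j. B $ i $ j \<ge> 0"
    and v_nonneg: "\<forall>j. v $ j \<ge> 0"
    and v_closed: "\<forall>i. v $ i = 0 \<longrightarrow> (B *v v) $ i = 0"
    and "v $ k = 0"
  shows "v = 0"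
proof -
  have edge: "v $ j = 0" if "v $ i = 0" "B $ i $ j \<noteq> 0" for i j
  proof -
    have "(\<Sum>j\<in>UNIV. B $ i $ j * v $ j) = 0"
      using v_closed that(1) by (simp add: matrix_vector_mult_def)
    then have "B $ i $ j * v $ j = 0"
      using B_nonneg v_nonneg by (simp add: sum_nonneg_eq_0_iff)
    then show ?thesis using that(2) by simp
  qed
  have "v $ j = 0" for j
  proof -
    have "(k, j) \<in> {(i, j). B $ i $ j \<noteq> 0}\<^sup>*"
      using irr by (simp add: irreducible_mat_def)
    then show ?thesis
      by (induction rule: rtrancl_induct) (use \<open>v $ k = 0\<close> edge in auto)
  qed
  then show ?thesis by (simp add: vec_eq_iff)
qed

lemma sis_equilibrium_interior:
  fixes B :: "real^'n^'n"
  assumes irr: "irreducible_mat B" and B_nonneg: "\<forall>i j. B $ i $ j \<ge> 0"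
    and e_pos: "\<forall>i. e $ i > 0"
    and x_mem: "x \<in> Xi - {0}" and eq: "sis_equilibrium e B x"
  shows "0 < x $ i \<and> x $ i < 1"
proof -
  have x01: "0 \<le> x $ j \<and> x $ j \<le> 1" for j
    using x_mem by (simp add: Xi_def)
  have eq_i: "e $ j * x $ j = (1 - x $ j) * (B *v x) $ j" for j
    using eq by (simp add: sis_equilibrium_iff)
  have "x $ i \<noteq> 0"
  proof
    assume "x $ i = 0"
    moreover have "\<forall>j. x $ j = 0 \<longrightarrow> (B *v x) $ j = 0"
      using eq_i by (metis diff_zero mult_1 mult_zero_right)
    ultimately have "x = 0"
      using irreducible_nonneg_vanishing[OF irr B_nonneg, of x i] x01 by blast
    with x_mem show False by simp
  qed
  moreover have "x $ i \<noteq> 1"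
    using eq_i[of i] e_pos[rule_format, of i] x01[of i] by auto
  ultimately show ?thesis using x01[of i] by simp
qed

text \<open>At an index maximising \<open>y\<^sub>k / x\<^sub>k =: t\<close> the bound \<open>y \<le> t x\<close> gives
  \<open>e\<^sub>k y\<^sub>k (1 - x\<^sub>k) \<le> (1 - y\<^sub>k) t (B x)\<^sub>k (1 - x\<^sub>k) = (1 - y\<^sub>k) d\<^sub>k y\<^sub>k\<close>,
  which forces \<open>y\<^sub>k \<le> x\<^sub>k\<close>.\<close>
lemma sis_equilibrium_antimono:
  fixes B :: "real^'n^'n"
  assumes B_nonneg: "\<forall>i j. B $ i $ j \<ge> 0"
    and d_pos: "\<forall>i. d $ i > 0" and d_le_e: "\<forall>i. d $ i \<le> e $ i"
    and x_int: "\<forall>i. 0 < x $ i \<and> x $ i < 1" and x_eq: "sis_equilibrium d B x"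
    and y_int: "\<forall>i. 0 < y $ i \<and> y $ i < 1" and y_eq: "sis_equilibrium e B y"
  shows "y $ i \<le> x $ i"
proof -
  have x_eq_i: "d $ j * x $ j = (1 - x $ j) * (B *v x) $ j" for j
    using x_eq by (simp add: sis_equilibrium_iff)
  have y_eq_i: "e $ j * y $ j = (1 - y $ j) * (B *v y) $ j" for j
    using y_eq by (simp add: sis_equilibrium_iff)
  define t where "t = Max (range (\<lambda>j. y $ j / x $ j))"
  have "t \<in> range (\<lambda>j. y $ j / x $ j)"
    unfolding t_def by (rule Max_in) auto
  then obtain k where t_k: "t = y $ k / x $ k"
    by blast
  have y_le: "y $ j \<le> t * x $ j" for j
  proof -
    have "y $ j / x $ j \<le> t"
      unfolding t_def by (rule Max_ge) auto
    then show ?thesis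
      using x_int by (simp add: pos_divide_le_eq)
  qed
  have "t \<le> 1"
  proof (rule ccontr)
    assume t_gt: "\<not> t \<le> 1"
    have y_k: "y $ k = t * x $ k"
      using t_k x_int[rule_format, of k] by simp
    have By_le: "(B *v y) $ k \<le> t * (B *v x) $ k"
      using nonneg_matrix_vector_mono[OF B_nonneg, of y "t *\<^sub>R x" k] y_le
      by (simp add: matrix_vector_mult_scaleR)
    have "e $ k * y $ k * (1 - x $ k) = (1 - y $ k) * (B *v y) $ k * (1 - x $ k)"
      by (simp add: y_eq_i)
    also have "\<dots> \<le> (1 - y $ k) * (t * (B *v x) $ k) * (1 - x $ k)"
      using By_le x_int[rule_format, of k] y_int[rule_format, of k]
      by (intro mult_right_mono mult_left_mono) auto
    also have "\<dots> = (1 - y $ k) * (d $ k * y $ k)"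
      by (simp add: y_k x_eq_i algebra_simps)
    also have "\<dots> \<le> e $ k * y $ k * (1 - y $ k)"
      using d_le_e y_int by (simp add: mult.commute mult_left_mono)
    finally have "e $ k * y $ k * (1 - x $ k) \<le> e $ k * y $ k * (1 - y $ k)" .
    moreover have "0 < e $ k * y $ k"
      using d_pos d_le_e y_int by (meson mult_pos_pos order.strict_trans2)
    ultimately have "y $ k \<le> x $ k"
      by (simp add: mult_le_cancel_left_pos)
    moreover have "1 * x $ k < t * x $ k"
      using t_gt x_int by (intro mult_strict_right_mono) auto
    ultimately show False
      using y_k by simp
  qed
  have "t * x $ i \<le> 1 * x $ i"
    using \<open>t \<le> 1\<close> x_int[rule_format, of i] by (intro mult_right_mono) auto
  then show ?thesis
    using y_le[of i] by simp
qed

lemma sis_equilibrium_strict_antimono: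
  fixes B :: "real^'n^'n"
  assumes irr: "irreducible_mat B" and B_nonneg: "\<forall>i j. B $ i $ j \<ge> 0"
    and d_pos: "\<forall>i. d $ i > 0" and d_le_e: "\<forall>i. d $ i \<le> e $ i"
    and d_less_e: "\<exists>j. d $ j < e $ j"
    and x_int: "\<forall>i. 0 < x $ i \<and> x $ i < 1" and x_eq: "sis_equilibrium d B x"
    and y_int: "\<forall>i. 0 < y $ i \<and> y $ i < 1" and y_eq: "sis_equilibrium e B y"
  shows "y $ i < x $ i"
proof -
  have y_le_x: "y $ j \<le> x $ j" for j
    using sis_equilibrium_antimono[OF B_nonneg d_pos d_le_e x_int x_eq y_int y_eq] .
  have touching: "e $ j = d $ j \<and> (B *v y) $ j = (B *v x) $ j" if "y $ j = x $ j" for j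
  proof -
    have x_j: "0 < x $ j" "x $ j < 1"
      using x_int by auto
    have "(1 - x $ j) * (B *v y) $ j = e $ j * x $ j"
      using y_eq that unfolding sis_equilibrium_iff by metis
    moreover have "d $ j * x $ j \<le> e $ j * x $ j"
      using d_le_e x_j by (simp add: mult_right_mono)
    moreover have "d $ j * x $ j = (1 - x $ j) * (B *v x) $ j"
      using x_eq by (simp add: sis_equilibrium_iff)
    moreover have "(1 - x $ j) * (B *v y) $ j \<le> (1 - x $ j) * (B *v x) $ j"
      using nonneg_matrix_vector_mono[OF B_nonneg] y_le_x x_j by (simp add: mult_left_mono)
    ultimately have "d $ j * x $ j = e $ j * x $ j"
      and "(1 - x $ j) * (B *v y) $ j = (1 - x $ j) * (B *v x) $ j"
      by linarith+
    then show ?thesis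
      using x_j by auto
  qed
  show ?thesis
  proof (rule ccontr)
    assume "\<not> y $ i < x $ i"
    then have "(x - y) $ i = 0"
      using y_le_x[of i] by simp
    then have "x - y = 0"
      using irreducible_nonneg_vanishing[OF irr B_nonneg, of "x - y" i] y_le_x touching
      by (simp add: matrix_vector_mult_diff_distrib)
    then have "e $ j = d $ j" for j
      using touching[of j] by simp
    with d_less_e show False
      by auto
  qed
qed

theorem lemma5:
  fixes d :: "real^'n" and B :: "real^'n^'n" and h :: "'n \<Rightarrow> real \<Rightarrow> real"
    and xs xbar :: "real^'n"
  assumes n2: "CARD('n) \<ge> 2"
    and d_pos: "\<forall>i. d $ i > 0"
    and B_nonneg: "\<forall>i j. B $ i $ j \<ge> 0"
    and B_irr: "irreducible_mat B"
    and s_pos: "spectral_abscissa (- diag_mat d + B) > 0"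
    and h_bdd: "\<forall>i. bounded (h i ` {0..1})"
    and h_nonneg: "\<forall>i. \<forall>s\<in>{0..1}. h i s \<ge> 0"
    and h_smooth: "\<forall>i. smooth_on {0..1} (h i)"
    and h_mono: "\<forall>i. mono_on {0..1} (h i)"
    and h_zero: "\<forall>i. h i 0 = 0"
    and h_pos: "\<exists>j. \<forall>s\<in>{0<..1}. h j s > 0"
    and xs_mem: "xs \<in> Xi - {0}"
    and xs_eq: "(- diag_mat d + B - diag_mat xs ** B) *v xs = 0"
    and xbar_mem: "xbar \<in> Xi - {0}"
    and xbar_eq: "(- diag_mat d - diag_mat (\<chi> i. h i (xbar $ i)) + B - diag_mat xbar ** B) *v xbar = 0"
  shows "\<forall>i. xbar $ i < xs $ i"
proof -
  define e where "e = d + (\<chi> i. h i (xbar $ i))"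
  have d_le_e: "\<forall>i. d $ i \<le> e $ i"
    using h_nonneg xbar_mem by (auto simp: e_def Xi_def)
  have e_pos: "\<forall>i. e $ i > 0"
    using d_pos d_le_e by (meson order.strict_trans2)
  have xs_equil: "sis_equilibrium d B xs"
    using xs_eq by (simp add: sis_equilibrium_def)
  have xbar_equil: "sis_equilibrium e B xbar"
    using xbar_eq by (simp add: sis_equilibrium_def e_def diag_mat_add diff_add_eq_diff_diff_swap)
  have xs_int: "\<forall>i. 0 < xs $ i \<and> xs $ i < 1"
    using sis_equilibrium_interior[OF B_irr B_nonneg d_pos xs_mem xs_equil] by blast
  have xbar_int: "\<forall>i. 0 < xbar $ i \<and> xbar $ i < 1"
    using sis_equilibrium_interior[OF B_irr B_nonneg e_pos xbar_mem xbar_equil] by blast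
  have "\<exists>j. d $ j < e $ j"
    using h_pos xbar_int by (fastforce simp: e_def)
  then show ?thesis
    using sis_equilibrium_strict_antimono[OF B_irr B_nonneg d_pos d_le_e _ xs_int xs_equil
        xbar_int xbar_equil] by blast
qed

end
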